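(* Let $\phi\in(0,1)$ and $h_G>1$. For $b\in(0,1)$ define $g(x,b)=\frac{x^{1-b}-(1-x)^{1-b}}{x(1-x)^{1-b}-(1-x)x^{1-b}}$ for $x\in(\tfrac12,1)$, $g(\tfrac12,b)=\frac2b-2$, and $g(1,b)=+\infty$. Then: (i) $g(x,b)$ is continuous on $x\in[\tfrac12,1]$ (as an extended-real-valued function); (ii) $g(x,b)$ is increasing in $x$ and decreasing in $b$; (iii) if $\frac{2}{\phi(h_G-1)+2}<b<1$, then the equation $g(x,b)=\phi(h_G-1)$ has a unique solution $\hat x(\phi,h_G,b)\in(\tfrac12,1)$, and $\hat x(\phi,h_G,b)$ is increasing with respect to each of $b$, $h_G$, and $\phi$. *)

theory Defs
  imports "HOL-Analysis.Analysis"
begin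

definition g :: "real \<Rightarrow> real \<Rightarrow> ereal" where
  "g x b = (if x = 1 then \<infinity>
            else if x = 1/2 then ereal (2 / b - 2)
            else ereal ((x powr (1 - b) - (1 - x) powr (1 - b)) /
                        (x * (1 - x) powr (1 - b) - (1 - x) * x powr (1 - b))))"

definition xhat :: "real \<Rightarrow> real \<Rightarrow> real \<Rightarrow> real" where
  "xhat phi hG b = (THE x. x \<in> {1/2<..<1} \<and> g x b = ereal (phi * (hG - 1)))"

definition admissible :: "real \<Rightarrow> real \<Rightarrow> real \<Rightarrow> bool" where
  "admissible phi hG b \<longleftrightarrow> 0 < phi \<and> phi < 1 \<and> 1 < hG \<and>
     2 / (phi * (hG - 1) + 2) < b \<and> b < 1"

end

theory Submission
  imports Defs "HOL-Real_Asymp.Real_Asymp"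
begin

text \<open>Substituting \<open>y = ln (x / (1 - x)) / 2\<close>, i.e. \<open>x = e\<^sup>y / (2 cosh y)\<close>, which maps
  \<open>(1/2, 1)\<close> increasingly onto \<open>(0, \<infinity>)\<close>, turns the closed form of \<open>g x b\<close> into
  \<open>sinh ((2 - b) y) / sinh (b y) - 1\<close>. For \<open>0 < q < p\<close> the ratio \<open>sinh (p y) / sinh (q y)\<close>
  increases strictly from \<open>p / q\<close> (its limit at \<open>0\<close>) to \<open>\<infinity>\<close>, and it decreases when \<open>q\<close>
  grows while \<open>p\<close> shrinks; with \<open>p = 2 - b\<close>, \<open>q = b\<close> this gives continuity and the
  monotonicity of \<open>g\<close>. The intermediate value theorem and strict monotonicity then give
  the unique solution of \<open>g x b = \<phi> (h\<^sub>G - 1)\<close>, and the monotonicity of \<open>g\<close> in both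
  arguments transfers to the solution.\<close>

definition sinh_ratio :: "real \<Rightarrow> real \<Rightarrow> real \<Rightarrow> real" where
  "sinh_ratio p q y = sinh (p * y) / sinh (q * y)"

lemma sinh_cosh_cross_less:
  fixes p q y :: real
  assumes "0 < q" "q < p" "0 < y"
  shows "q * sinh (p * y) * cosh (q * y) < p * cosh (p * y) * sinh (q * y)"
proof -
  define \<phi> where "\<phi> t = p * cosh (p * t) * sinh (q * t) - q * sinh (p * t) * cosh (q * t)" for t
  have deriv: "DERIV \<phi> t :> (p\<^sup>2 - q\<^sup>2) * sinh (p * t) * sinh (q * t)" for t
    unfolding \<phi>_def by (auto intro!: derivative_eq_intros simp: algebra_simps power2_eq_square)
  have "q\<^sup>2 < p\<^sup>2" using assms by (simp add: power_strict_mono)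
  then have pos: "(p\<^sup>2 - q\<^sup>2) * sinh (p * t) * sinh (q * t) > 0" if "0 < t" for t
    using assms that by simp
  have "continuous_on {0..y} \<phi>"
    unfolding \<phi>_def by (intro continuous_intros)
  then have "\<phi> 0 < \<phi> y"
  proof (rule DERIV_pos_imp_increasing_open[OF \<open>0 < y\<close>, rotated])
    fix t :: real assume "0 < t" "t < y"
    then show "\<exists>d. DERIV \<phi> t :> d \<and> d > 0" using deriv pos by blast
  qed
  then show ?thesis by (simp add: \<phi>_def)
qed

lemma sinh_ratio_strict_mono:
  fixes p q :: real
  assumes "0 < q" "q < p"
  shows "strict_mono_on {0<..} (sinh_ratio p q)"
proof (rule strict_mono_onI)
  fix y1 y2 :: real assume y: "y1 \<in> {0<..}" "y1 < y2"
  define c where "c t = p * cosh (p * t) * sinh (q * t) - q * sinh (p * t) * cosh (q * t)" for t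
  have "continuous_on {y1..y2} (sinh_ratio p q)"
    unfolding sinh_ratio_def using y assms by (intro continuous_intros) auto
  then show "sinh_ratio p q y1 < sinh_ratio p q y2"
  proof (rule DERIV_pos_imp_increasing_open[OF \<open>y1 < y2\<close>, rotated])
    fix t :: real assume "y1 < t" "t < y2"
    then have "0 < t" using y by simp
    then have "sinh (q * t) \<noteq> 0" using assms by simp
    have "DERIV (sinh_ratio p q) t :> c t / (sinh (q * t))\<^sup>2"
      unfolding sinh_ratio_def c_def using \<open>sinh (q * t) \<noteq> 0\<close>
      by (auto intro!: derivative_eq_intros simp: algebra_simps power2_eq_square)
    moreover have "c t / (sinh (q * t))\<^sup>2 > 0"
      using sinh_cosh_cross_less[OF assms \<open>0 < t\<close>] \<open>sinh (q * t) \<noteq> 0\<close> by (simp add: c_def)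
    ultimately show "\<exists>d. DERIV (sinh_ratio p q) t :> d \<and> d > 0" by blast
  qed
qed

lemma sinh_ratio_tendsto_at_right_0:
  fixes p q :: real
  assumes "0 < p" "0 < q"
  shows "(sinh_ratio p q \<longlongrightarrow> p / q) (at_right 0)"
  unfolding sinh_ratio_def sinh_field_def divide_inverse using assms by real_asymp

lemma filterlim_sinh_ratio_at_top:
  fixes p q :: real
  assumes "0 < q" "q < p"
  shows "filterlim (sinh_ratio p q) at_top at_top"
proof -
  have "0 < p - q" using assms by simp
  then show ?thesis unfolding sinh_ratio_def sinh_field_def using assms by real_asymp
qed

lemma sinh_ratio_gt:
  fixes p q y :: real
  assumes "0 < q" "q < p" "0 < y"
  shows "p / q < sinh_ratio p q y"
proof -
  have "\<forall>t\<in>{0<..<y / 2}. sinh_ratio p q t \<le> sinh_ratio p q (y / 2)"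
    using assms strict_mono_onD[OF sinh_ratio_strict_mono[OF assms(1,2)]]
    by (auto intro: less_imp_le)
  then have "eventually (\<lambda>t. sinh_ratio p q t \<le> sinh_ratio p q (y / 2)) (at_right 0)"
    unfolding eventually_at_right_field using assms by (intro exI[of _ "y / 2"]) auto
  then have "p / q \<le> sinh_ratio p q (y / 2)"
    using assms by (intro tendsto_upperbound[OF sinh_ratio_tendsto_at_right_0]) auto
  also have "\<dots> < sinh_ratio p q y"
    using assms by (intro strict_mono_onD[OF sinh_ratio_strict_mono]) auto
  finally show ?thesis .
qed

lemma sinh_ratio_less_sinh_ratio:
  fixes p1 p2 q1 q2 y :: real
  assumes "0 < p2" "p2 \<le> p1" "0 < q1" "q1 < q2" "0 < y"
  shows "sinh_ratio p2 q2 y < sinh_ratio p1 q1 y"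
proof -
  have pos: "0 < sinh (p2 * y)" "0 < sinh (q1 * y)" using assms by simp_all
  have le: "sinh (p2 * y) \<le> sinh (p1 * y)" "sinh (q1 * y) < sinh (q2 * y)"
    using assms by (simp_all add: mult_right_mono)
  then have "sinh (p2 * y) * sinh (q1 * y) < sinh (p1 * y) * sinh (q2 * y)"
    using pos by (intro mult_le_less_imp_less) auto
  then show ?thesis
    unfolding sinh_ratio_def using pos le by (simp add: field_simps)
qed

definition half_log_odds :: "real \<Rightarrow> real" where
  "half_log_odds x = ln (x / (1 - x)) / 2"

lemma half_log_odds_pos:
  fixes x :: real
  assumes "1/2 < x" "x < 1"
  shows "0 < half_log_odds x"
proof -
  have "1 < x / (1 - x)" using assms by (simp add: field_simps)
  then show ?thesis by (simp add: half_log_odds_def)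
qed

lemma half_log_odds_strict_mono: "strict_mono_on {0<..<1} half_log_odds"
proof (rule strict_mono_onI)
  fix x1 x2 :: real assume "x1 \<in> {0<..<1}" "x2 \<in> {0<..<1}" "x1 < x2"
  then have "0 < x1 / (1 - x1)" "x1 / (1 - x1) < x2 / (1 - x2)"
    by (auto simp: field_simps)
  then show "half_log_odds x1 < half_log_odds x2" by (simp add: half_log_odds_def)
qed

lemma filterlim_half_log_odds_at_right_half: "filterlim half_log_odds (at_right 0) (at_right (1/2))"
  unfolding half_log_odds_def by real_asymp

lemma filterlim_half_log_odds_at_left_1: "filterlim half_log_odds at_top (at_left 1)"
  unfolding half_log_odds_def by real_asymp

lemma isCont_half_log_odds:
  fixes x :: real
  assumes "0 < x" "x < 1"
  shows "isCont half_log_odds x"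
  unfolding half_log_odds_def using assms by (intro continuous_intros) auto

text \<open>The closed form of \<open>g\<close> at \<open>s = e\<^bsup>m+y\<^esup>\<close>, \<open>t = e\<^bsup>m-y\<^esup>\<close> (\<open>s = x\<close>, \<open>t = 1 - x\<close>, exponent \<open>a = 1 - b\<close>).\<close>
lemma exp_powr_diff_quotient:
  fixes a m y :: real
  shows "(exp (m + y) powr a - exp (m - y) powr a) /
         (exp (m + y) * exp (m - y) powr a - exp (m - y) * exp (m + y) powr a)
       = sinh (a * y) / (exp m * sinh ((1 - a) * y))"
proof -
  have plus: "exp (m + y) powr a = exp (a * m) * exp (a * y)"
    by (simp add: exp_powr_real flip: exp_add) (simp add: algebra_simps)
  have minus: "exp (m - y) powr a = exp (a * m) * exp (- (a * y))"
    by (simp add: exp_powr_real flip: exp_add) (simp add: algebra_simps)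
  have num: "exp (m + y) powr a - exp (m - y) powr a = 2 * exp (a * m) * sinh (a * y)"
    unfolding plus minus sinh_field_def by (simp add: algebra_simps)
  have shift: "exp (m + y) * exp (- (a * y)) = exp m * exp ((1 - a) * y)"
              "exp (m - y) * exp (a * y) = exp m * exp (- ((1 - a) * y))"
    by (simp_all flip: exp_add) (simp_all add: algebra_simps)
  have "exp (m + y) * exp (m - y) powr a - exp (m - y) * exp (m + y) powr a
      = exp (a * m) * (exp (m + y) * exp (- (a * y)) - exp (m - y) * exp (a * y))"
    unfolding plus minus by (simp add: algebra_simps)
  also have "\<dots> = 2 * exp (a * m) * exp m * sinh ((1 - a) * y)"
    unfolding shift sinh_field_def by (simp add: right_diff_distrib mult.assoc)
  finally show ?thesis unfolding num by simp
qed

lemma g_eq_sinh_ratio: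
  fixes x b :: real
  assumes x: "1/2 < x" "x < 1" and "b \<noteq> 0"
  shows "g x b = ereal (sinh_ratio (2 - b) b (half_log_odds x) - 1)"
proof -
  define y where "y = half_log_odds x"
  define m where "m = (ln x + ln (1 - x)) / 2"
  have "0 < y" unfolding y_def using half_log_odds_pos[OF x] .
  then have "sinh (b * y) \<noteq> 0" using \<open>b \<noteq> 0\<close> by simp
  have "ln (x / (1 - x)) = ln x - ln (1 - x)" using x by (simp add: ln_div)
  then have "m + y = ln x" "m - y = ln (1 - x)"
    by (simp_all add: m_def y_def half_log_odds_def field_simps)
  then have xe: "exp (m + y) = x" "exp (m - y) = 1 - x"
    using x by simp_all
  have "exp m * (2 * cosh y) = exp (m + y) + exp (m - y)"
    by (simp add: cosh_field_def exp_add exp_diff exp_minus field_simps)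
  then have cosh: "1 / exp m = 2 * cosh y"
    unfolding xe by (simp add: field_simps)
  have prod: "2 * cosh y * sinh ((1 - b) * y) = sinh ((2 - b) * y) - sinh (b * y)"
  proof -
    have "(2 - b) * y = (1 - b) * y + y" "b * y = y - (1 - b) * y" by (simp_all add: algebra_simps)
    then show ?thesis by (simp add: sinh_add sinh_diff)
  qed
  have "g x b = ereal (sinh ((1 - b) * y) / (exp m * sinh (b * y)))"
    using x exp_powr_diff_quotient[of m y "1 - b"] unfolding xe by (simp add: g_def)
  also have "sinh ((1 - b) * y) / (exp m * sinh (b * y))
      = 2 * cosh y * sinh ((1 - b) * y) / sinh (b * y)"
    by (simp flip: cosh)
  also have "\<dots> = sinh_ratio (2 - b) b y - 1"
    using \<open>sinh (b * y) \<noteq> 0\<close> unfolding prod sinh_ratio_def by (simp add: diff_divide_distrib)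
  finally show ?thesis unfolding y_def .
qed

lemma g_half [simp]: "g (1/2) b = ereal (2 / b - 2)"
  by (simp add: g_def)

lemma g_one [simp]: "g 1 b = \<infinity>"
  by (simp add: g_def)

lemma g_tendsto_half:
  fixes b :: real
  assumes "0 < b" "b < 2"
  shows "((\<lambda>x. g x b) \<longlongrightarrow> g (1/2) b) (at_right (1/2))"
proof -
  have "((\<lambda>x. sinh_ratio (2 - b) b (half_log_odds x) - 1) \<longlongrightarrow> (2 - b) / b - 1) (at_right (1/2))"
    using assms
    by (intro tendsto_diff filterlim_compose[OF sinh_ratio_tendsto_at_right_0 filterlim_half_log_odds_at_right_half]) auto
  moreover have "(2 - b) / b - 1 = 2 / b - 2" using assms by (simp add: field_simps)
  ultimately have "((\<lambda>x. ereal (sinh_ratio (2 - b) b (half_log_odds x) - 1)) \<longlongrightarrow> g (1/2) b)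
      (at_right (1/2))"
    by (simp add: tendsto_ereal)
  moreover have "eventually (\<lambda>x. ereal (sinh_ratio (2 - b) b (half_log_odds x) - 1) = g x b)
      (at_right (1/2))"
    unfolding eventually_at_right_field using assms
    by (intro exI[of _ 1]) (auto simp: g_eq_sinh_ratio)
  ultimately show ?thesis
    by (rule Lim_transform_eventually)
qed

lemma g_tendsto_one:
  fixes b :: real
  assumes "0 < b" "b < 1"
  shows "((\<lambda>x. g x b) \<longlongrightarrow> g 1 b) (at_left 1)"
proof -
  have "filterlim (\<lambda>x. -1 + sinh_ratio (2 - b) b (half_log_odds x)) at_top (at_left 1)"
    using assms by (intro filterlim_tendsto_add_at_top[OF tendsto_const]
        filterlim_compose[OF filterlim_sinh_ratio_at_top filterlim_half_log_odds_at_left_1]) auto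
  then have "((\<lambda>x. ereal (sinh_ratio (2 - b) b (half_log_odds x) - 1)) \<longlongrightarrow> g 1 b) (at_left 1)"
    unfolding g_one tendsto_PInfty_eq_at_top by simp
  moreover have "eventually (\<lambda>x. ereal (sinh_ratio (2 - b) b (half_log_odds x) - 1) = g x b)
      (at_left 1)"
    unfolding eventually_at_left_field using assms
    by (intro exI[of _ "1/2"]) (auto simp: g_eq_sinh_ratio)
  ultimately show ?thesis
    by (rule Lim_transform_eventually)
qed

lemma isCont_g:
  fixes x b :: real
  assumes "1/2 < x" "x < 1" "b \<noteq> 0"
  shows "isCont (\<lambda>x. g x b) x"
proof -
  have "0 < half_log_odds x" using half_log_odds_pos assms by simp
  then have cont: "isCont (\<lambda>x. ereal (sinh_ratio (2 - b) b (half_log_odds x) - 1)) x"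
    unfolding sinh_ratio_def using assms
    by (intro continuous_intros isCont_half_log_odds) auto
  have "eventually (\<lambda>x. x \<in> {1/2<..<1}) (nhds x)"
    using assms by (intro eventually_nhds_in_open) auto
  then have "eventually (\<lambda>x. ereal (sinh_ratio (2 - b) b (half_log_odds x) - 1) = g x b) (nhds x)"
    by eventually_elim (use assms in \<open>auto simp: g_eq_sinh_ratio\<close>)
  with cont show ?thesis
    using isCont_cong by fastforce
qed

lemma g_continuous_on:
  fixes b :: real
  assumes "0 < b" "b < 1"
  shows "continuous_on {1/2..1} (\<lambda>x. g x b)"
  using assms g_tendsto_half g_tendsto_one isCont_g
  by (intro continuous_on_IccI) (auto simp: isCont_def)

lemma g_strict_mono_on:
  fixes b :: real
  assumes b: "0 < b" "b < 1"
  shows "strict_mono_on {1/2..1} (\<lambda>x. g x b)"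
proof (rule strict_mono_onI)
  fix x1 x2 :: real assume x: "x1 \<in> {1/2..1}" "x2 \<in> {1/2..1}" "x1 < x2"
  have "b < 2 - b" using b by simp
  consider "x2 = 1" | "x1 = 1/2" "x2 < 1" | "1/2 < x1" "x2 < 1"
    using x by fastforce
  then show "g x1 b < g x2 b"
  proof cases
    case 1
    then show ?thesis using x by (simp add: g_def)
  next
    case 2
    then have "2 / b - 2 < sinh_ratio (2 - b) b (half_log_odds x2) - 1"
      using sinh_ratio_gt[OF b(1) \<open>b < 2 - b\<close>, of "half_log_odds x2"] half_log_odds_pos[of x2] x b
      by (simp add: diff_divide_distrib)
    then show ?thesis unfolding \<open>x1 = 1/2\<close> using 2 x b by (simp add: g_eq_sinh_ratio)
  next
    case 3
    then have "half_log_odds x1 < half_log_odds x2" "0 < half_log_odds x1"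
      using x half_log_odds_strict_mono half_log_odds_pos by (auto simp: strict_mono_on_def)
    then have "sinh_ratio (2 - b) b (half_log_odds x1) < sinh_ratio (2 - b) b (half_log_odds x2)"
      using b by (intro strict_mono_onD[OF sinh_ratio_strict_mono]) auto
    then show ?thesis using 3 x b by (simp add: g_eq_sinh_ratio)
  qed
qed

lemma g_strict_antimono_in_b:
  fixes x b1 b2 :: real
  assumes "x \<in> {1/2..<1}" "0 < b1" "b1 < b2" "b2 < 2"
  shows "g x b2 < g x b1"
proof (cases "x = 1/2")
  case True
  have "2 / b2 < 2 / b1" using assms by (simp add: divide_strict_left_mono)
  then show ?thesis unfolding True by simp
next
  case False
  then have "1/2 < x" "x < 1" using assms by auto
  then have "sinh_ratio (2 - b2) b2 (half_log_odds x) < sinh_ratio (2 - b1) b1 (half_log_odds x)"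
    using assms by (intro sinh_ratio_less_sinh_ratio half_log_odds_pos) auto
  then show ?thesis using \<open>1/2 < x\<close> \<open>x < 1\<close> assms by (simp add: g_eq_sinh_ratio)
qed

lemma g_eq_unique_solution:
  fixes b v :: real
  assumes b: "0 < b" "b < 1" and v: "2 / b - 2 < v"
  shows "\<exists>!x. x \<in> {1/2<..<1} \<and> g x b = ereal v"
proof -
  have "connected ((\<lambda>x. g x b) ` {1/2..1})"
    using g_continuous_on[OF b] by (rule connected_continuous_image) simp
  moreover have "g (1/2) b \<in> (\<lambda>x. g x b) ` {1/2..1}" "g 1 b \<in> (\<lambda>x. g x b) ` {1/2..1}"
    by (rule imageI, simp)+
  moreover have "g (1/2) b \<le> ereal v" "ereal v \<le> g 1 b" using v by simp_all
  ultimately have "ereal v \<in> (\<lambda>x. g x b) ` {1/2..1}"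
    by (rule connectedD_interval)
  then obtain x where x: "x \<in> {1/2..1}" "g x b = ereal v" by (metis imageE)
  have "g (1/2) b < g x b" "g x b < g 1 b" using x v by simp_all
  then have "x \<noteq> 1/2" "x \<noteq> 1" by (metis less_irrefl)+
  with x have "x \<in> {1/2<..<1}" by simp
  have inj: "inj_on (\<lambda>x. g x b) {1/2..1}"
    using g_strict_mono_on[OF b] by (rule strict_mono_on_imp_inj_on)
  show ?thesis
  proof (rule ex1I)
    show "x \<in> {1/2<..<1} \<and> g x b = ereal v" using \<open>x \<in> {1/2<..<1}\<close> x by simp
  next
    fix y assume "y \<in> {1/2<..<1} \<and> g y b = ereal v"
    then show "y = x" using x by (intro inj_onD[OF inj]) auto
  qed
qed

lemma admissibleD:
  assumes "admissible phi hG b"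
  shows "0 < b" "b < 1" "2 / b - 2 < phi * (hG - 1)"
proof -
  have v: "0 < phi * (hG - 1)" and bound: "2 / (phi * (hG - 1) + 2) < b" and "b < 1"
    using assms by (simp_all add: admissible_def)
  moreover have "0 < 2 / (phi * (hG - 1) + 2)" using v by simp
  ultimately show "0 < b" "b < 1" by linarith+
  then show "2 / b - 2 < phi * (hG - 1)"
    using bound v by (simp add: field_simps)
qed

lemma xhat_solves:
  assumes "admissible phi hG b"
  shows "xhat phi hG b \<in> {1/2<..<1}" "g (xhat phi hG b) b = ereal (phi * (hG - 1))"
  using theI'[OF g_eq_unique_solution[OF admissibleD[OF assms]]]
  unfolding xhat_def by simp_all

lemma xhat_mem_Icc:
  assumes "admissible phi hG b"
  shows "xhat phi hG b \<in> {1/2..1}"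
  using xhat_solves(1)[OF assms] by simp

lemma xhat_strict_mono_in_level:
  assumes "admissible phi1 hG1 b" "admissible phi2 hG2 b"
    and "phi1 * (hG1 - 1) < phi2 * (hG2 - 1)"
  shows "xhat phi1 hG1 b < xhat phi2 hG2 b"
proof -
  have "g (xhat phi1 hG1 b) b < g (xhat phi2 hG2 b) b"
    using assms by (simp add: xhat_solves)
  then show ?thesis
    using strict_mono_on_less[OF g_strict_mono_on[OF admissibleD(1,2)[OF assms(1)]]
        xhat_mem_Icc[OF assms(1)] xhat_mem_Icc[OF assms(2)]]
    by simp
qed

lemma xhat_strict_mono_in_b:
  assumes "admissible phi hG b1" "admissible phi hG b2" "b1 < b2"
  shows "xhat phi hG b1 < xhat phi hG b2"
proof -
  have "g (xhat phi hG b1) b2 < g (xhat phi hG b1) b1"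
    using assms xhat_solves(1)[OF assms(1)] admissibleD[OF assms(1)] admissibleD[OF assms(2)]
    by (intro g_strict_antimono_in_b) auto
  also have "\<dots> = g (xhat phi hG b2) b2"
    using assms by (simp add: xhat_solves)
  finally show ?thesis
    using strict_mono_on_less[OF g_strict_mono_on[OF admissibleD(1,2)[OF assms(2)]]
        xhat_mem_Icc[OF assms(1)] xhat_mem_Icc[OF assms(2)]]
    by simp
qed

theorem lemmaB2:
  shows "(\<forall>b\<in>{0<..<1}. continuous_on {1/2..1} (\<lambda>x. g x b))
  \<and> (\<forall>b\<in>{0<..<1}. strict_mono_on {1/2..1} (\<lambda>x. g x b))
  \<and> (\<forall>x\<in>{1/2..<1}. \<forall>b1 b2. 0 < b1 \<and> b1 < b2 \<and> b2 < 1 \<longrightarrow> g x b2 < g x b1)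
  \<and> (\<forall>x\<in>{1/2..1}. \<forall>b1 b2. 0 < b1 \<and> b1 < b2 \<and> b2 < 1 \<longrightarrow> g x b2 \<le> g x b1)
  \<and> (\<forall>phi hG b. admissible phi hG b \<longrightarrow>
           (\<exists>!x. x \<in> {1/2<..<1} \<and> g x b = ereal (phi * (hG - 1))))
  \<and> (\<forall>phi hG b1 b2. admissible phi hG b1 \<and> admissible phi hG b2 \<and> b1 < b2 \<longrightarrow>
           xhat phi hG b1 < xhat phi hG b2)
  \<and> (\<forall>phi hG1 hG2 b. admissible phi hG1 b \<and> admissible phi hG2 b \<and> hG1 < hG2 \<longrightarrow>
           xhat phi hG1 b < xhat phi hG2 b)
  \<and> (\<forall>phi1 phi2 hG b. admissible phi1 hG b \<and> admissible phi2 hG b \<and> phi1 < phi2 \<longrightarrow>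
           xhat phi1 hG b < xhat phi2 hG b)"
proof (intro conjI ballI allI impI; (elim conjE)?)
  show "continuous_on {1/2..1} (\<lambda>x. g x b)" "strict_mono_on {1/2..1} (\<lambda>x. g x b)"
    if "b \<in> {0<..<1}" for b
    using that by (auto intro: g_continuous_on g_strict_mono_on)
  show "g x b2 < g x b1" if "x \<in> {1/2..<1}" "0 < b1" "b1 < b2" "b2 < 1" for x b1 b2
    using that by (intro g_strict_antimono_in_b) auto
  show "g x b2 \<le> g x b1" if "x \<in> {1/2..1}" "0 < b1" "b1 < b2" "b2 < 1" for x b1 b2
    using that g_strict_antimono_in_b[of x b1 b2] by (cases "x = 1") auto
  show "\<exists>!x. x \<in> {1/2<..<1} \<and> g x b = ereal (phi * (hG - 1))"
    if "admissible phi hG b" for phi hG b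
    using that by (intro g_eq_unique_solution admissibleD)
  show "xhat phi hG b1 < xhat phi hG b2"
    if "admissible phi hG b1" "admissible phi hG b2" "b1 < b2" for phi hG b1 b2
    using that by (rule xhat_strict_mono_in_b)
  show "xhat phi hG1 b < xhat phi hG2 b"
    if "admissible phi hG1 b" "admissible phi hG2 b" "hG1 < hG2" for phi hG1 hG2 b
    using that by (intro xhat_strict_mono_in_level) (auto simp: admissible_def)
  show "xhat phi1 hG b < xhat phi2 hG b"
    if "admissible phi1 hG b" "admissible phi2 hG b" "phi1 < phi2" for phi1 phi2 hG b
    using that by (intro xhat_strict_mono_in_level) (auto simp: admissible_def)
qed

end
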